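(* Let $\theta>1$, $r\in(\theta^{-1},\theta^{-1/2}]$ and $s=\max\big(1,\frac{\ln\theta}{\ln(r\theta)}-2\big)$. Let $(P_1,\dots,P_n)$ be a random price sequence with values in $[1,\theta]$ whose maximum $P^*$ has law $F$, and let $Y$ be a random prediction with law $G$ on $[1,\theta]$, independent of the prices. Define $\Lambda(z)=\int\mathcal{E}(z,y)^s\,\mathrm{d}G(y)$ and $\Upsilon(y)=\frac{\int z\,\mathcal{E}(z,y)^s\,\mathrm{d}F(z)}{\mathbb{E}[P^*]}$. Then \[ \frac{\mathbb{E}[\mathsf{A}^1_r(P,Y)]}{\mathbb{E}[P^*]}\ \ge\ \frac1{r\theta}\int\Upsilon(y)\,\mathrm{d}G(y)\ =\ \frac{1}{r\theta}\int\frac{z\,\Lambda(z)}{\mathbb{E}[P^*]}\,\mathrm{d}F(z). \]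
   Context: One-max search: fix $\theta>1$. Prices $p_1,\dots,p_n\in[1,\theta]$ are revealed one at a time; the algorithm receives at the start a prediction $y\in[1,\theta]$ of the maximum price. At each step it irrevocably accepts the current price (payoff = that price) or rejects it; if nothing is accepted the payoff is $1$. Let $\varphi_r(z)=\frac{r\theta-1}{1-r}+\frac{1-r^2\theta}{1-r}\cdot\frac{z}{r\theta}$ and $\Phi^1_r(z)=\max(r\theta,\varphi_r(z))$; $\mathsf{A}^1_r$ accepts the first price $p_i\ge\Phi^1_r(y)$, and $\mathsf{A}^1_r(P,Y)$ is its payoff on the realized prices and prediction. $\mathcal{E}(a,b)=\min\{a/b,b/a\}$. *)

theory Defs
  imports "HOL-Probability.Probability"
begin

definition Eff :: "real \<Rightarrow> real \<Rightarrow> real" where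
  "Eff a b = min (a / b) (b / a)"

definition phi_r :: "real \<Rightarrow> real \<Rightarrow> real \<Rightarrow> real" where
  "phi_r \<theta> r z = (r * \<theta> - 1) / (1 - r) + (1 - r^2 * \<theta>) / (1 - r) * (z / (r * \<theta>))"

definition Phi1 :: "real \<Rightarrow> real \<Rightarrow> real \<Rightarrow> real" where
  "Phi1 \<theta> r z = max (r * \<theta>) (phi_r \<theta> r z)"

definition threshold_payoff :: "real \<Rightarrow> real list \<Rightarrow> real" where
  "threshold_payoff thr ps = (case find (\<lambda>p. thr \<le> p) ps of Some p \<Rightarrow> p | None \<Rightarrow> 1)"

definition A1 :: "real \<Rightarrow> real \<Rightarrow> real list \<Rightarrow> real \<Rightarrow> real" where
  "A1 \<theta> r ps y = threshold_payoff (Phi1 \<theta> r y) ps"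

end

theory Submission
  imports Defs
begin

(*
  Write t = r * theta and P* for the maximal price.  Pointwise, P* * E(P*, Y)^s <= t * A(P, Y).
  If the threshold Phi(Y) is reached, the algorithm earns at least Phi(Y) >= phi(Y) >= Y / t, and
  P* * E^s <= Y.  Otherwise it earns 1, and P* < Phi(Y) together with
  P* * E^s <= min (Y, P*^(s+1) / Y^s) gives P* * E^s <= t: for Y > t this rests on
  phi(Y)^(s+1) <= t * Y^s on [t, theta], which holds at both ends (phi(t) = t, phi(theta) = theta / t,
  and theta <= t^(s+2) is how s was chosen) and in between because an affine map with positive
  coefficients is log-convex along geometric means.  Taking expectations, and computing
  E[P* * E(P*, Y)^s] as an iterated integral over the product of the laws of Y and P*, which are
  independent, gives the inequality and the equality of the two iterated integrals.
*)

section \<open>Elementary inequalities\<close>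

lemma Holder_inequality_two_terms:
  fixes a b c d l :: real
  assumes "0 \<le> l" "l \<le> 1" "0 < a" "0 < b" "0 < c" "0 < d"
  shows "a powr (1-l) * b powr l + c powr (1-l) * d powr l \<le> (a+c) powr (1-l) * (b+d) powr l"
proof -
  have young_ac: "(a/(a+c)) powr (1-l) * (b/(b+d)) powr l \<le> (1-l) * (a/(a+c)) + l * (b/(b+d))"
    using assms by (intro Youngs_inequality_0) auto
  have young_bd: "(c/(a+c)) powr (1-l) * (d/(b+d)) powr l \<le> (1-l) * (c/(a+c)) + l * (d/(b+d))"
    using assms by (intro Youngs_inequality_0) auto
  have "a/(a+c) + c/(a+c) = 1" "b/(b+d) + d/(b+d) = 1"
    using assms by (simp_all add: add_divide_distrib[symmetric])
  then have "(1-l) * (a/(a+c)) + l * (b/(b+d)) + ((1-l) * (c/(a+c)) + l * (d/(b+d))) = 1"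
    by (metis (no_types, opaque_lifting) add.commute add.left_commute distrib_left mult.right_neutral diff_add_cancel)
  then have "(a/(a+c)) powr (1-l) * (b/(b+d)) powr l + (c/(a+c)) powr (1-l) * (d/(b+d)) powr l \<le> 1"
    using young_ac young_bd by linarith
  also have "(a/(a+c)) powr (1-l) * (b/(b+d)) powr l + (c/(a+c)) powr (1-l) * (d/(b+d)) powr l
     = (a powr (1-l) * b powr l + c powr (1-l) * d powr l) / ((a+c) powr (1-l) * (b+d) powr l)"
    using assms by (simp add: powr_divide field_simps)
  finally show ?thesis
    using assms by (simp add: divide_le_eq)
qed

lemma affine_geometric_mean_le:
  fixes \<alpha> \<beta> a b l :: real
  assumes "0 < \<alpha>" "0 \<le> \<beta>" "0 < a" "0 < b" "0 \<le> l" "l \<le> 1"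
  shows "\<alpha> + \<beta> * (a powr (1-l) * b powr l) \<le> (\<alpha> + \<beta>*a) powr (1-l) * (\<alpha> + \<beta>*b) powr l"
proof (cases "\<beta> = 0")
  case True
  then show ?thesis
    using assms by (simp add: powr_add[symmetric])
next
  case False
  with assms have "0 < \<beta>" by simp
  have "\<alpha> + \<beta> * (a powr (1-l) * b powr l) = \<alpha> powr (1-l) * \<alpha> powr l + (\<beta>*a) powr (1-l) * (\<beta>*b) powr l"
    using assms \<open>0 < \<beta>\<close> by (simp add: powr_mult powr_add[symmetric] algebra_simps)
  also have "\<dots> \<le> (\<alpha> + \<beta>*a) powr (1-l) * (\<alpha> + \<beta>*b) powr l"
    using assms \<open>0 < \<beta>\<close> by (intro Holder_inequality_two_terms) auto
  finally show ?thesis .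
qed

lemma affine_powr_le_mult_powr:
  fixes \<alpha> \<beta> t \<theta> s y :: real
  assumes "0 < \<alpha>" "0 \<le> \<beta>" "1 < t" "t < \<theta>"
    and fixpoint: "\<alpha> + \<beta>*t = t" and at_\<theta>: "\<alpha> + \<beta>*\<theta> = \<theta>/t"
    and \<theta>_le: "\<theta> \<le> t powr (s+2)" and "0 \<le> s" and y: "t \<le> y" "y \<le> \<theta>"
  shows "(\<alpha> + \<beta>*y) powr (s+1) \<le> t * y powr s"
proof -
  define l where "l = ln (y/t) / ln (\<theta>/t)"
  have "ln (\<theta>/t) > 0" using assms by simp
  then have l: "0 \<le> l" "l \<le> 1" and ln_y: "ln y = ln t + l * (ln \<theta> - ln t)"
    using assms by (auto simp: l_def divide_le_eq_1 ln_div)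
  have "t powr (1-l) * \<theta> powr l = exp ((1-l) * ln t + l * ln \<theta>)"
    using assms by (simp add: powr_def exp_add)
  also have "(1-l) * ln t + l * ln \<theta> = ln y"
    using ln_y by (simp add: algebra_simps)
  also have "exp (ln y) = y"
    using assms by simp
  finally have "\<alpha> + \<beta>*y \<le> t powr (1-l) * (\<theta>/t) powr l"
    using affine_geometric_mean_le[of \<alpha> \<beta> t \<theta> l] assms l by simp
  moreover have "0 < \<alpha> + \<beta>*y"
    using assms by (simp add: add_pos_nonneg)
  ultimately have "ln (\<alpha> + \<beta>*y) \<le> ln (t powr (1-l) * (\<theta>/t) powr l)"
    using assms by simp
  also have "\<dots> = ln t + l * (ln \<theta> - 2 * ln t)"
    using assms by (simp add: ln_mult ln_div algebra_simps)
  finally have ln_le: "ln (\<alpha> + \<beta>*y) \<le> ln t + l * (ln \<theta> - 2 * ln t)" .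
  have "ln \<theta> \<le> ln (t powr (s+2))"
    using \<theta>_le assms by (subst ln_le_cancel_iff) auto
  also have "\<dots> = (s+2) * ln t"
    using assms by simp
  finally have ln_\<theta>: "ln \<theta> \<le> (s+2) * ln t" .
  have "(s+1) * ln (\<alpha> + \<beta>*y) \<le> (s+1) * (ln t + l * (ln \<theta> - 2 * ln t))"
    using ln_le assms by (intro mult_left_mono) auto
  also have "\<dots> = ln t + s * ln y - l * ((s+2) * ln t - ln \<theta>)"
    unfolding ln_y by (simp add: algebra_simps)
  also have "\<dots> \<le> ln t + s * ln y"
    using l ln_\<theta> by simp
  finally have "ln ((\<alpha> + \<beta>*y) powr (s+1)) \<le> ln (t * y powr s)"
    using assms \<open>0 < \<alpha> + \<beta>*y\<close> by (simp add: ln_mult)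
  then show ?thesis
    by (rule ln_le_cancel_iff[THEN iffD1, rotated 2]) (use assms \<open>0 < \<alpha> + \<beta>*y\<close> in auto)
qed

lemma le_powr_if_ln_ratio_le:
  fixes \<theta> t s :: real
  assumes "0 < \<theta>" "1 < t" "ln \<theta> / ln t - 2 \<le> s"
  shows "\<theta> \<le> t powr (s + 2)"
proof -
  have "0 < ln t" "ln \<theta> / ln t \<le> s + 2"
    using assms by auto
  then have "ln \<theta> \<le> (s + 2) * ln t"
    by (simp add: pos_divide_le_eq)
  also have "\<dots> = ln (t powr (s + 2))"
    using assms by simp
  finally show ?thesis
    by (rule ln_le_cancel_iff[THEN iffD1, rotated 2]) (use assms in auto)
qed

section \<open>The efficiency ratio and the threshold\<close>

lemma Eff_pos: "0 < p \<Longrightarrow> 0 < y \<Longrightarrow> 0 < Eff p y"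
  by (simp add: Eff_def)

lemma Eff_le_1: "0 < p \<Longrightarrow> 0 < y \<Longrightarrow> Eff p y \<le> 1"
  unfolding Eff_def by (cases "p \<le> y") (simp_all add: min_le_iff_disj divide_le_eq_1)

lemma Eff_le_divide: "Eff p y \<le> p / y"
  by (simp add: Eff_def)

lemma mult_Eff_le: "0 < p \<Longrightarrow> 0 < y \<Longrightarrow> p * Eff p y \<le> y"
  by (auto simp: Eff_def min_def field_simps)

lemma mult_Eff_powr_le:
  assumes "0 < p" "0 < y" "1 \<le> s"
  shows "p * Eff p y powr s \<le> y"
proof -
  have "Eff p y powr s \<le> Eff p y"
    using powr_mono'[of 1 s "Eff p y"] Eff_pos[of p y] Eff_le_1[of p y] assms by simp
  then have "p * Eff p y powr s \<le> p * Eff p y"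
    using assms by simp
  also have "\<dots> \<le> y"
    using assms(1,2) by (rule mult_Eff_le)
  finally show ?thesis .
qed

lemma mult_Eff_powr_le_powr:
  assumes "0 < p" "0 < y" "0 \<le> s"
  shows "p * Eff p y powr s \<le> p powr (s+1) / y powr s"
proof -
  have "Eff p y powr s \<le> (p / y) powr s"
    using assms Eff_pos[of p y] Eff_le_divide[of p y] by (intro powr_mono2) auto
  then have "p * Eff p y powr s \<le> p * (p / y) powr s"
    using assms by simp
  also have "\<dots> = p powr (s+1) / y powr s"
    using assms by (simp add: powr_divide powr_add)
  finally show ?thesis .
qed

lemma phi_r_affine: "phi_r \<theta> r z = phi_r \<theta> r 0 + (1 - r^2 * \<theta>) / ((1 - r) * (r * \<theta>)) * z"
  by (simp add: phi_r_def)

lemma phi_r_fixpoint: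
  assumes "r \<noteq> 1" "r * \<theta> \<noteq> 0"
  shows "phi_r \<theta> r (r * \<theta>) = r * \<theta>"
proof -
  have "1 - r \<noteq> 0" using assms by simp
  then show ?thesis
    using assms by (simp add: phi_r_def power2_eq_square divide_simps) (simp add: algebra_simps)
qed

lemma phi_r_at_theta:
  assumes "r \<noteq> 1" "r * \<theta> \<noteq> 0"
  shows "phi_r \<theta> r \<theta> = 1 / r"
proof -
  have "1 - r \<noteq> 0" using assms by simp
  then show ?thesis
    using assms by (simp add: phi_r_def power2_eq_square divide_simps) (simp add: algebra_simps)
qed

lemma le_mult_phi_r:
  assumes "0 < r" "r < 1" "1 \<le> r * \<theta>" "z \<le> \<theta>"
  shows "z \<le> r * \<theta> * phi_r \<theta> r z"
proof -
  have "1 - r \<noteq> 0" "r * \<theta> \<noteq> 0" using assms by auto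
  then have "r * \<theta> * phi_r \<theta> r z - z = r * (r * \<theta> - 1) * (\<theta> - z) / (1 - r)"
    by (simp add: phi_r_def power2_eq_square divide_simps) (simp add: algebra_simps)
  also have "\<dots> \<ge> 0"
    using assms by simp
  finally show ?thesis by simp
qed

lemma phi_r_mono:
  assumes "0 < r" "r < 1" "0 < \<theta>" "r^2 * \<theta> \<le> 1" "z \<le> z'"
  shows "phi_r \<theta> r z \<le> phi_r \<theta> r z'"
proof -
  have "0 \<le> (1 - r^2 * \<theta>) / ((1 - r) * (r * \<theta>))"
    using assms by simp
  then have "(1 - r^2 * \<theta>) / ((1 - r) * (r * \<theta>)) * z \<le> (1 - r^2 * \<theta>) / ((1 - r) * (r * \<theta>)) * z'"
    using assms by (intro mult_left_mono)
  then show ?thesis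
    by (subst (1 2) phi_r_affine) simp
qed

lemma parameter_bounds:
  fixes \<theta> r :: real
  assumes "1 < \<theta>" "1 / \<theta> < r" "r \<le> 1 / sqrt \<theta>"
  shows "0 < r" "r < 1" "1 < r * \<theta>" "r^2 * \<theta> \<le> 1"
proof -
  show "0 < r"
    using assms by (smt (verit) divide_pos_pos)
  show "1 < r * \<theta>"
    using assms by (simp add: divide_less_eq mult.commute)
  show "r < 1"
    using assms by (smt (verit) divide_less_eq_1_pos real_sqrt_gt_1_iff)
  have "r^2 \<le> (1 / sqrt \<theta>)^2"
    using assms \<open>0 < r\<close> by (intro power_mono) auto
  then show "r^2 * \<theta> \<le> 1"
    using assms by (simp add: power_divide pos_le_divide_eq)
qed

lemma mult_Eff_powr_le_Phi1:
  assumes "1 < \<theta>" "1 / \<theta> < r" "r \<le> 1 / sqrt \<theta>" "1 \<le> s" "0 < p" "0 < y" "y \<le> \<theta>"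
  shows "p * Eff p y powr s \<le> r * \<theta> * Phi1 \<theta> r y"
proof -
  note r = parameter_bounds[OF assms(1-3)]
  have "p * Eff p y powr s \<le> y"
    using assms by (intro mult_Eff_powr_le)
  also have "\<dots> \<le> r * \<theta> * phi_r \<theta> r y"
    using r assms by (intro le_mult_phi_r) auto
  also have "\<dots> \<le> r * \<theta> * Phi1 \<theta> r y"
    using r assms by (simp add: Phi1_def)
  finally show ?thesis .
qed

lemma mult_Eff_powr_le_below_Phi1:
  assumes "1 < \<theta>" "1 / \<theta> < r" "r \<le> 1 / sqrt \<theta>" "1 \<le> s" "\<theta> \<le> (r * \<theta>) powr (s + 2)"
    and "0 < p" "p < Phi1 \<theta> r y" "0 < y" "y \<le> \<theta>"
  shows "p * Eff p y powr s \<le> r * \<theta>"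
proof (cases "y \<le> r * \<theta>")
  case True
  then show ?thesis
    using assms mult_Eff_powr_le[of p y s] by simp
next
  case False
  note r = parameter_bounds[OF assms(1-3)]
  define \<alpha> where "\<alpha> = phi_r \<theta> r 0"
  define \<beta> where "\<beta> = (1 - r^2 * \<theta>) / ((1 - r) * (r * \<theta>))"
  have phi: "phi_r \<theta> r z = \<alpha> + \<beta> * z" for z
    unfolding \<alpha>_def \<beta>_def by (rule phi_r_affine)
  have "r * \<theta> = phi_r \<theta> r (r * \<theta>)"
    using r by (intro phi_r_fixpoint[symmetric]) auto
  also have "\<dots> \<le> phi_r \<theta> r y"
    using r assms False by (intro phi_r_mono) auto
  finally have "p < \<alpha> + \<beta> * y"
    using assms(7) phi by (simp add: Phi1_def)
  have "p * Eff p y powr s \<le> p powr (s + 1) / y powr s"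
    using assms by (intro mult_Eff_powr_le_powr) auto
  also have "\<dots> \<le> (\<alpha> + \<beta> * y) powr (s + 1) / y powr s"
    using assms \<open>p < \<alpha> + \<beta> * y\<close> by (intro divide_right_mono powr_mono2) auto
  also have "\<dots> \<le> r * \<theta>"
  proof -
    have "(\<alpha> + \<beta> * y) powr (s + 1) \<le> r * \<theta> * y powr s"
    proof (rule affine_powr_le_mult_powr)
      show "0 < \<alpha>" "0 \<le> \<beta>"
        using r by (auto simp: \<alpha>_def \<beta>_def phi_r_def)
      show "\<alpha> + \<beta> * (r * \<theta>) = r * \<theta>" "\<alpha> + \<beta> * \<theta> = \<theta> / (r * \<theta>)"
        using r assms(1) phi_r_fixpoint[of r \<theta>] phi_r_at_theta[of r \<theta>] by (auto simp: phi)
    qed (use r assms False in auto)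
    then show ?thesis
      using assms by (simp add: divide_le_eq)
  qed
  finally show ?thesis .
qed

section \<open>The threshold algorithm\<close>

lemma threshold_payoff_Nil [simp]: "threshold_payoff thr [] = 1"
  by (simp add: threshold_payoff_def)

lemma threshold_payoff_Cons [simp]:
  "threshold_payoff thr (p # ps) = (if thr \<le> p then p else threshold_payoff thr ps)"
  by (simp add: threshold_payoff_def)

lemma threshold_payoff_ge: "\<exists>p\<in>set ps. thr \<le> p \<Longrightarrow> thr \<le> threshold_payoff thr ps"
  by (induction ps) auto

lemma threshold_payoff_eq_1: "\<forall>p\<in>set ps. p < thr \<Longrightarrow> threshold_payoff thr ps = 1"
  by (induction ps) auto

lemma threshold_payoff_cases: "threshold_payoff thr ps = 1 \<or> threshold_payoff thr ps \<in> set ps"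
  by (induction ps) auto

lemma Max_image_in_atLeastAtMost:
  assumes "finite I" "I \<noteq> {}" "\<And>i. i \<in> I \<Longrightarrow> f i \<in> {a..b}"
  shows "Max (f ` I) \<in> {a..b}"
proof -
  have "Max (f ` I) \<in> f ` I"
    using assms by simp
  then show ?thesis
    using assms(3) by auto
qed

lemma Max_mult_Eff_powr_le_A1:
  assumes "1 < \<theta>" "1 / \<theta> < r" "r \<le> 1 / sqrt \<theta>" "1 \<le> s" "\<theta> \<le> (r * \<theta>) powr (s + 2)"
    and "ps \<noteq> []" "\<forall>p\<in>set ps. 0 < p" "0 < y" "y \<le> \<theta>"
  shows "Max (set ps) * Eff (Max (set ps)) y powr s \<le> r * \<theta> * A1 \<theta> r ps y"
proof -
  let ?p = "Max (set ps)"
  have "?p \<in> set ps"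
    using assms by simp
  then have "0 < ?p"
    using assms by blast
  show ?thesis
  proof (cases "Phi1 \<theta> r y \<le> ?p")
    case True
    have "?p * Eff ?p y powr s \<le> r * \<theta> * Phi1 \<theta> r y"
      using assms \<open>0 < ?p\<close> by (intro mult_Eff_powr_le_Phi1) auto
    also have "\<dots> \<le> r * \<theta> * A1 \<theta> r ps y"
    proof -
      have "Phi1 \<theta> r y \<le> A1 \<theta> r ps y"
        unfolding A1_def using True \<open>?p \<in> set ps\<close> by (intro threshold_payoff_ge) auto
      then show ?thesis
        using parameter_bounds[OF assms(1-3)] assms(1) by simp
    qed
    finally show ?thesis .
  next
    case False
    then have "?p < Phi1 \<theta> r y"
      by simp
    then have "\<forall>p\<in>set ps. p < Phi1 \<theta> r y"
      using assms(6) by simp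
    then have "A1 \<theta> r ps y = 1"
      unfolding A1_def by (rule threshold_payoff_eq_1)
    moreover have "?p * Eff ?p y powr s \<le> r * \<theta>"
      by (rule mult_Eff_powr_le_below_Phi1[OF assms(1-5) \<open>0 < ?p\<close> \<open>?p < Phi1 \<theta> r y\<close> assms(8,9)])
    ultimately show ?thesis by simp
  qed
qed

section \<open>Measurability, independence and iterated integrals\<close>

lemma borel_measurable_Eff [measurable (raw)]:
  assumes [measurable]: "f \<in> borel_measurable M" "g \<in> borel_measurable M"
  shows "(\<lambda>x. Eff (f x) (g x)) \<in> borel_measurable M"
  unfolding Eff_def by measurable

lemma borel_measurable_Phi1 [measurable (raw)]:
  assumes [measurable]: "f \<in> borel_measurable M"
  shows "(\<lambda>x. Phi1 \<theta> r (f x)) \<in> borel_measurable M"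
  unfolding Phi1_def phi_r_def by measurable

lemma borel_measurable_threshold_payoff:
  assumes "\<And>i. i \<in> set xs \<Longrightarrow> X i \<in> borel_measurable M" "T \<in> borel_measurable M"
  shows "(\<lambda>\<omega>. threshold_payoff (T \<omega>) (map (\<lambda>i. X i \<omega>) xs)) \<in> borel_measurable M"
  using assms(1)
proof (induction xs)
  case Nil
  then show ?case by simp
next
  case (Cons i xs)
  then have [measurable]: "X i \<in> borel_measurable M"
    and [measurable]: "(\<lambda>\<omega>. threshold_payoff (T \<omega>) (map (\<lambda>i. X i \<omega>) xs)) \<in> borel_measurable M"
    by auto
  note [measurable] = assms(2)
  show ?case by simp measurable
qed

lemma (in prob_space) indep_var_iff_indep_set:
  "indep_var S X T Y \<longleftrightarrow> (random_variable S X \<and> random_variable T Y) \<and>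
    indep_set {X -` A \<inter> space M | A. A \<in> sets S} {Y -` B \<inter> space M | B. B \<in> sets T}"
  unfolding indep_var_def indep_vars_def2 indep_set_def UNIV_bool
  by (intro arg_cong2[where f="(\<and>)"] arg_cong2[where f=indep_sets] ext) (auto split: bool.split)

lemma (in prob_space) indep_set_mono:
  "indep_set A B \<Longrightarrow> A' \<subseteq> A \<Longrightarrow> B' \<subseteq> B \<Longrightarrow> indep_set A' B'"
  unfolding indep_sets2_eq by blast

(* indep_var needs both variables in one type, so a vector-valued Z cannot be paired with X there;
   independence is transported to h o Z on the level of generating sets instead. *)
lemma (in prob_space) indep_var_compose_of_indep_set:
  assumes indep: "indep_set {X -` A \<inter> space M | A. A \<in> sets S} {Z -` B \<inter> space M | B. B \<in> sets T}"
    and [measurable]: "X \<in> measurable M S" "Z \<in> measurable M T" "h \<in> measurable T S"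
  shows "indep_var S X S (\<lambda>\<omega>. h (Z \<omega>))"
  unfolding indep_var_iff_indep_set
proof (intro conjI)
  have "{(\<lambda>\<omega>. h (Z \<omega>)) -` C \<inter> space M | C. C \<in> sets S} \<subseteq> {Z -` B \<inter> space M | B. B \<in> sets T}"
  proof safe
    fix C assume "C \<in> sets S"
    then have "h -` C \<inter> space T \<in> sets T"
      by measurable
    moreover have "(\<lambda>\<omega>. h (Z \<omega>)) -` C \<inter> space M = Z -` (h -` C \<inter> space T) \<inter> space M"
      using measurable_space[of Z M T] by auto
    ultimately show "\<exists>B. (\<lambda>\<omega>. h (Z \<omega>)) -` C \<inter> space M = Z -` B \<inter> space M \<and> B \<in> sets T"
      by blast
  qed
  then show "indep_set {X -` A \<inter> space M | A. A \<in> sets S} {(\<lambda>\<omega>. h (Z \<omega>)) -` C \<inter> space M | C. C \<in> sets S}"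
    by (rule indep_set_mono[OF indep order_refl])
qed simp_all

lemma (in prob_space) indep_var_Max_of_indep_set:
  fixes P :: "'i \<Rightarrow> 'a \<Rightarrow> real" and Y :: "'a \<Rightarrow> real"
  assumes "indep_set {Y -` A \<inter> space M | A. A \<in> sets borel}
      {(\<lambda>\<omega>. \<lambda>i\<in>I. P i \<omega>) -` B \<inter> space M | B. B \<in> sets (PiM I (\<lambda>_. borel :: real measure))}"
    and "finite I" "Y \<in> borel_measurable M" "\<And>i. i \<in> I \<Longrightarrow> P i \<in> borel_measurable M"
  shows "indep_var borel Y borel (\<lambda>\<omega>. Max ((\<lambda>i. P i \<omega>) ` I))"
proof -
  have "indep_var borel Y borel (\<lambda>\<omega>. Max ((\<lambda>i\<in>I. P i \<omega>) ` I))"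
    using assms borel_measurable_Max[of I "\<lambda>i x. x i" "PiM I (\<lambda>_. borel :: real measure)"]
    by (intro indep_var_compose_of_indep_set[where h = "\<lambda>f. Max (f ` I)"] measurable_restrict) auto
  then show ?thesis
    by simp
qed

lemma (in prob_space) integral_indep_var_iterated:
  fixes f :: "'b \<Rightarrow> 'b \<Rightarrow> 'c::{banach, second_countable_topology}"
  assumes indep: "indep_var S X T Y" and [measurable]: "case_prod f \<in> borel_measurable (S \<Otimes>\<^sub>M T)"
    and int: "integrable M (\<lambda>\<omega>. f (X \<omega>) (Y \<omega>))"
  shows "(\<integral>x. (\<integral>y. f x y \<partial>distr M T Y) \<partial>distr M S X) = (\<integral>\<omega>. f (X \<omega>) (Y \<omega>) \<partial>M)"
    and "(\<integral>y. (\<integral>x. f x y \<partial>distr M S X) \<partial>distr M T Y) = (\<integral>\<omega>. f (X \<omega>) (Y \<omega>) \<partial>M)"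
proof -
  have [measurable]: "X \<in> measurable M S" "Y \<in> measurable M T"
    using indep_var_rv1[OF indep] indep_var_rv2[OF indep] .
  have joint: "distr M S X \<Otimes>\<^sub>M distr M T Y = distr M (S \<Otimes>\<^sub>M T) (\<lambda>\<omega>. (X \<omega>, Y \<omega>))"
    using indep by (simp add: indep_var_distribution_eq)
  interpret XY: pair_prob_space "distr M S X" "distr M T Y"
    by (intro pair_prob_space.intro pair_sigma_finite.intro prob_space_distr prob_space_imp_sigma_finite)
      simp_all
  have "integrable (distr M S X \<Otimes>\<^sub>M distr M T Y) (case_prod f)"
    unfolding joint using int by (subst integrable_distr_eq) auto
  moreover have "integral\<^sup>L (distr M S X \<Otimes>\<^sub>M distr M T Y) (case_prod f) = (\<integral>\<omega>. f (X \<omega>) (Y \<omega>) \<partial>M)"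
    unfolding joint by (subst integral_distr) auto
  ultimately show "(\<integral>x. (\<integral>y. f x y \<partial>distr M T Y) \<partial>distr M S X) = (\<integral>\<omega>. f (X \<omega>) (Y \<omega>) \<partial>M)"
    and "(\<integral>y. (\<integral>x. f x y \<partial>distr M S X) \<partial>distr M T Y) = (\<integral>\<omega>. f (X \<omega>) (Y \<omega>) \<partial>M)"
    by (simp_all add: XY.integral_fst XY.integral_snd)
qed

lemma (in prob_space) integrable_mult_Eff_powr:
  assumes [measurable]: "X \<in> borel_measurable M" "Y \<in> borel_measurable M"
    and "\<And>\<omega>. \<omega> \<in> space M \<Longrightarrow> 0 < X \<omega>" "\<And>\<omega>. \<omega> \<in> space M \<Longrightarrow> Y \<omega> \<in> {0<..\<theta>}" "1 \<le> s"
  shows "integrable M (\<lambda>\<omega>. X \<omega> * Eff (X \<omega>) (Y \<omega>) powr s)"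
proof (rule integrable_const_bound[where B = \<theta>])
  show "AE \<omega> in M. norm (X \<omega> * Eff (X \<omega>) (Y \<omega>) powr s) \<le> \<theta>"
  proof (rule AE_I2)
    fix \<omega> assume "\<omega> \<in> space M"
    then have "0 < X \<omega>" "0 < Y \<omega>" "Y \<omega> \<le> \<theta>"
      using assms(3,4) by auto
    then show "norm (X \<omega> * Eff (X \<omega>) (Y \<omega>) powr s) \<le> \<theta>"
      using mult_Eff_powr_le[of "X \<omega>" "Y \<omega>" s] assms(5) by simp
  qed
qed simp

section \<open>The expected payoff\<close>

lemma (in prob_space) integral_Max_Eff_powr_le_A1:
  fixes P :: "nat \<Rightarrow> 'a \<Rightarrow> real" and Y :: "'a \<Rightarrow> real"
  assumes params: "1 < \<theta>" "1 / \<theta> < r" "r \<le> 1 / sqrt \<theta>" "1 \<le> s" "\<theta> \<le> (r * \<theta>) powr (s + 2)"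
    and "0 < n"
    and [measurable]: "\<And>i. i < n \<Longrightarrow> P i \<in> borel_measurable M"
    and P: "\<And>i \<omega>. i < n \<Longrightarrow> \<omega> \<in> space M \<Longrightarrow> P i \<omega> \<in> {1..\<theta>}"
    and [measurable]: "Y \<in> borel_measurable M"
    and Y: "\<And>\<omega>. \<omega> \<in> space M \<Longrightarrow> Y \<omega> \<in> {1..\<theta>}"
  shows "(\<integral>\<omega>. Max ((\<lambda>i. P i \<omega>) ` {..<n}) * Eff (Max ((\<lambda>i. P i \<omega>) ` {..<n})) (Y \<omega>) powr s \<partial>M)
    \<le> r * \<theta> * (\<integral>\<omega>. A1 \<theta> r (map (\<lambda>i. P i \<omega>) [0..<n]) (Y \<omega>) \<partial>M)"
proof -
  define ps where "ps \<omega> = map (\<lambda>i. P i \<omega>) [0..<n]" for \<omega>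
  have set_ps: "set (ps \<omega>) = (\<lambda>i. P i \<omega>) ` {..<n}" for \<omega>
    by (auto simp: ps_def)
  have ps_range: "set (ps \<omega>) \<subseteq> {1..\<theta>}" if "\<omega> \<in> space M" for \<omega>
    using P that by (auto simp: set_ps)
  have "ps \<omega> \<noteq> []" for \<omega>
    using \<open>0 < n\<close> by (simp add: ps_def)
  have Max_range: "Max (set (ps \<omega>)) \<in> {1..\<theta>}" if "\<omega> \<in> space M" for \<omega>
    unfolding set_ps using \<open>0 < n\<close> P that by (intro Max_image_in_atLeastAtMost) auto
  have [measurable]: "(\<lambda>\<omega>. Max (set (ps \<omega>))) \<in> borel_measurable M"
    unfolding set_ps by (rule borel_measurable_Max) auto
  have meas_A1: "(\<lambda>\<omega>. A1 \<theta> r (ps \<omega>) (Y \<omega>)) \<in> borel_measurable M"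
    unfolding A1_def ps_def by (intro borel_measurable_threshold_payoff borel_measurable_Phi1) auto
  have A1_range: "A1 \<theta> r (ps \<omega>) (Y \<omega>) \<in> {1..\<theta>}" if "\<omega> \<in> space M" for \<omega>
    using threshold_payoff_cases[of "Phi1 \<theta> r (Y \<omega>)" "ps \<omega>"] ps_range[OF that] params(1)
    by (auto simp: A1_def)
  have int_A1: "integrable M (\<lambda>\<omega>. A1 \<theta> r (ps \<omega>) (Y \<omega>))"
    using meas_A1 by (intro integrable_const_bound[where B = \<theta>] AE_I2) (auto dest!: A1_range)
  have int_Eff: "integrable M (\<lambda>\<omega>. Max (set (ps \<omega>)) * Eff (Max (set (ps \<omega>))) (Y \<omega>) powr s)"
    using params(4) by (intro integrable_mult_Eff_powr) (fastforce dest: Max_range Y)+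
  have "(\<integral>\<omega>. Max (set (ps \<omega>)) * Eff (Max (set (ps \<omega>))) (Y \<omega>) powr s \<partial>M)
      \<le> (\<integral>\<omega>. r * \<theta> * A1 \<theta> r (ps \<omega>) (Y \<omega>) \<partial>M)"
  proof (intro integral_mono int_Eff integrable_mult_right int_A1)
    fix \<omega> assume \<omega>: "\<omega> \<in> space M"
    show "Max (set (ps \<omega>)) * Eff (Max (set (ps \<omega>))) (Y \<omega>) powr s \<le> r * \<theta> * A1 \<theta> r (ps \<omega>) (Y \<omega>)"
      using \<open>ps \<omega> \<noteq> []\<close> ps_range[OF \<omega>] Y[OF \<omega>]
      by (intro Max_mult_Eff_powr_le_A1[OF params]) fastforce+
  qed
  then show ?thesis
    by (simp add: ps_def atLeast0LessThan)
qed

theorem corollary3: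
  fixes M :: "'a measure" and P :: "nat \<Rightarrow> 'a \<Rightarrow> real" and Y :: "'a \<Rightarrow> real"
    and \<theta> r s :: real and n :: nat
  assumes "prob_space M"
    and "\<theta> > 1" and "1 / \<theta> < r" and "r \<le> 1 / sqrt \<theta>"
    and "s = max 1 (ln \<theta> / ln (r * \<theta>) - 2)"
    and "n \<ge> 1"
    and "\<forall>i<n. P i \<in> borel_measurable M"
    and "\<forall>i<n. \<forall>\<omega>\<in>space M. P i \<omega> \<in> {1..\<theta>}"
    and "Y \<in> borel_measurable M"
    and "\<forall>\<omega>\<in>space M. Y \<omega> \<in> {1..\<theta>}"
    and "prob_space.indep_set M {Y -` A \<inter> space M | A. A \<in> sets borel}
          {(\<lambda>\<omega>. \<lambda>i\<in>{..<n}. P i \<omega>) -` B \<inter> space M | B. B \<in> sets (PiM {..<n} (\<lambda>_. borel :: real measure))}"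
  defines "Pstar \<equiv> (\<lambda>\<omega>. Max ((\<lambda>i. P i \<omega>) ` {..<n}))"
  shows "let F = distr M borel Pstar; G = distr M borel Y; EP = (\<integral>\<omega>. Pstar \<omega> \<partial>M);
             \<Lambda> = (\<lambda>z. \<integral>y. Eff z y powr s \<partial>G);
             \<Upsilon> = (\<lambda>y. (\<integral>z. z * Eff z y powr s \<partial>F) / EP)
         in (\<integral>\<omega>. A1 \<theta> r (map (\<lambda>i. P i \<omega>) [0..<n]) (Y \<omega>) \<partial>M) / EP
              \<ge> 1 / (r * \<theta>) * (\<integral>y. \<Upsilon> y \<partial>G)
          \<and> 1 / (r * \<theta>) * (\<integral>y. \<Upsilon> y \<partial>G) = 1 / (r * \<theta>) * (\<integral>z. z * \<Lambda> z / EP \<partial>F)"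
proof -
  interpret prob_space M by fact
  note r = parameter_bounds[OF assms(2-4)]
  have s: "1 \<le> s" "\<theta> \<le> (r * \<theta>) powr (s + 2)"
    using assms(2,5) r by (auto intro: le_powr_if_ln_ratio_le)
  have Pstar_range: "Pstar \<omega> \<in> {1..\<theta>}" if "\<omega> \<in> space M" for \<omega>
    unfolding Pstar_def using assms(6,8) that
    by (intro Max_image_in_atLeastAtMost) (auto simp: lessThan_empty_iff)
  have indep: "indep_var borel Y borel Pstar"
    unfolding Pstar_def using assms(7,9,11) by (intro indep_var_Max_of_indep_set) auto
  have int: "integrable M (\<lambda>\<omega>. Pstar \<omega> * Eff (Pstar \<omega>) (Y \<omega>) powr s)"
    using indep_var_rv2[OF indep] assms(9,10) Pstar_range s(1)
    by (intro integrable_mult_Eff_powr) fastforce+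
  note iterated = integral_indep_var_iterated[OF indep _ int]
  have "(\<integral>\<omega>. Pstar \<omega> * Eff (Pstar \<omega>) (Y \<omega>) powr s \<partial>M)
      \<le> r * \<theta> * (\<integral>\<omega>. A1 \<theta> r (map (\<lambda>i. P i \<omega>) [0..<n]) (Y \<omega>) \<partial>M)"
    unfolding Pstar_def using assms(6-10) s
    by (intro integral_Max_Eff_powr_le_A1[OF assms(2-4)]) auto
  moreover have "0 \<le> (\<integral>\<omega>. Pstar \<omega> \<partial>M)"
    using Pstar_range by (intro integral_nonneg_AE AE_I2) fastforce
  ultimately show ?thesis
    using iterated r by (simp add: Let_def divide_right_mono pos_divide_le_eq mult.commute)
qed

end
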